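(* Let $\mathfrak M$ be a D2-brane with $[X^i,X^j] = \imath \Theta^{ij}$, and $\Delta \vec X^2 \equiv \langle \hspace{-0.2em} \langle \Psi |\vec X^2 |\Psi \rangle \hspace{-0.2em} \rangle - \langle \hspace{-0.2em} \langle \Psi|\vec X|\Psi \rangle \hspace{-0.2em} \rangle^2$ be the square uncertainty onto the location in the state $\Psi \in \mathbb C^2 \otimes \mathscr F$ ($\vec X^2 \equiv \delta_{ij} X^i X^j$). Then \begin{equation} \Delta \vec X^2 \geq \frac{1}{2} {\varepsilon_{ij}}^k \langle \hspace{-0.2em} \langle \sigma_k \otimes \Theta^{ij} \rangle \hspace{-0.2em} \rangle . \end{equation}
   Context: A noncommutative D2-brane $\mathfrak M = (\mathfrak X,\mathbb C^2\otimes \mathscr F, D_x)$ is a spectral triple where $\mathscr F$ is a separable Hilbert space, $\mathfrak X$ is a $*$-algebra of operators acting on $\mathscr F$, and $D_x = \sigma_i \otimes (X^i-x^i)$ is its Dirac operator, with $(\sigma_i)$ the Pauli matrices, $(X^i)_{i=1,2,3}$ self-adjoint operators of $\mathfrak X$ (coordinate observables) and $x\in\mathbb R^3$ a classical parameter. $\langle \hspace{-0.2em} \langle \cdot \rangle \hspace{-0.2em} \rangle$ denotes the expectation value in the state $\Psi \in \mathbb C^2\otimes\mathscr F$. *)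

theory Defs
  imports Complex_Main "HOL-Library.Complex_Order"
begin

text \<open>Indices i,j,k of R^3 are 0,1,2; indices a,b of C^2 are 0,1.
  The space C^2 (x) F is identified with F x F: a state Psi is a pair of
  components psi 0, psi 1 in F.\<close>

text \<open>Pauli matrices: pauli 0 = sigma_1, pauli 1 = sigma_2, pauli 2 = sigma_3.\<close>
definition pauli :: "nat \<Rightarrow> nat \<Rightarrow> nat \<Rightarrow> complex" where
  "pauli k a b =
     (if k = 0 then (if a \<noteq> b then 1 else 0)
      else if k = 1 then (if a = 0 \<and> b = 1 then - \<i> else if a = 1 \<and> b = 0 then \<i> else 0)
      else if k = 2 then (if a = 0 \<and> b = 0 then 1 else if a = 1 \<and> b = 1 then -1 else 0)
      else 0)"

definition id2 :: "nat \<Rightarrow> nat \<Rightarrow> complex" where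
  "id2 a b = (if a = b then 1 else 0)"

definition levi_civita :: "nat \<Rightarrow> nat \<Rightarrow> nat \<Rightarrow> complex" where
  "levi_civita i j k =
     (if (i,j,k) \<in> {(0,1,2),(1,2,0),(2,0,1)} then 1
      else if (i,j,k) \<in> {(0,2,1),(2,1,0),(1,0,2)} then -1
      else 0)"

definition is_inner_product ::
  "(complex \<Rightarrow> 'f::ab_group_add \<Rightarrow> 'f) \<Rightarrow> ('f \<Rightarrow> 'f \<Rightarrow> complex) \<Rightarrow> bool" where
  "is_inner_product scl ip \<longleftrightarrow>
     vector_space scl \<and>
     (\<forall>u v w. ip u (v + w) = ip u v + ip u w) \<and>
     (\<forall>u v c. ip u (scl c v) = c * ip u v) \<and>
     (\<forall>u v. ip u v = cnj (ip v u)) \<and>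
     (\<forall>u. 0 \<le> ip u u) \<and>
     (\<forall>u. ip u u = 0 \<longrightarrow> u = 0)"

definition self_adjoint_op ::
  "(complex \<Rightarrow> 'f::ab_group_add \<Rightarrow> 'f) \<Rightarrow> ('f \<Rightarrow> 'f \<Rightarrow> complex) \<Rightarrow> ('f \<Rightarrow> 'f) \<Rightarrow> bool" where
  "self_adjoint_op scl ip A \<longleftrightarrow> Vector_Spaces.linear scl scl A \<and> (\<forall>u v. ip (A u) v = ip u (A v))"

text \<open>Expectation value <<Psi | M (x) A | Psi>> of M (x) A, with M a 2x2 matrix.\<close>
definition expval ::
  "('f \<Rightarrow> 'f \<Rightarrow> complex) \<Rightarrow> (nat \<Rightarrow> 'f) \<Rightarrow> (nat \<Rightarrow> nat \<Rightarrow> complex) \<Rightarrow> ('f \<Rightarrow> 'f) \<Rightarrow> complex" where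
  "expval ip psi M A = (\<Sum>a<2. \<Sum>b<2. M a b * ip (psi a) (A (psi b)))"

definition state_norm2 :: "('f \<Rightarrow> 'f \<Rightarrow> complex) \<Rightarrow> (nat \<Rightarrow> 'f) \<Rightarrow> complex" where
  "state_norm2 ip psi = (\<Sum>a<2. ip (psi a) (psi a))"

end

theory Submission
  imports Defs
begin

text \<open>Centre the coordinates, Y_i = X^i - <X^i>. The Y_i are again self-adjoint with the same
  commutators, and <Y^2> = Delta X^2 for a normalised state. The Pauli relation
  sigma_i sigma_j = delta_ij + i eps_ijk sigma_k gives
  (sigma.Y)^2 = Y^2 + (i/2) eps_ijk sigma_k [Y_i, Y_j] = Y^2 - (1/2) eps_ijk sigma_k Theta^ij,
  so the inequality is just 0 <= ||(sigma.Y) Psi||^2.\<close>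

lemma pauli_hermitian: "cnj (pauli k a b) = pauli k b a"
  by (simp add: pauli_def)

lemma pauli_mult:
  assumes "i < 3" "j < 3" "b < 2" "c < 2"
  shows "(\<Sum>a<2. pauli i b a * pauli j a c)
    = id2 i j * id2 b c + \<i> * (\<Sum>k<3. levi_civita i j k * pauli k b c)"
  using assms
  by (auto simp: less_Suc_eq numeral_3_eq_3 numeral_2_eq_2 pauli_def levi_civita_def id2_def)

lemma levi_civita_swap: "levi_civita j i k = - levi_civita i j k"
  by (auto simp: levi_civita_def)

lemma levi_civita_antisymmetrize:
  fixes F :: "nat \<Rightarrow> nat \<Rightarrow> nat \<Rightarrow> complex"
  shows "(\<Sum>i<3. \<Sum>j<3. \<Sum>k<3. levi_civita i j k * F i j k)
    = 1/2 * (\<Sum>i<3. \<Sum>j<3. \<Sum>k<3. levi_civita i j k * (F i j k - F j i k))"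
proof -
  have "(\<Sum>i<3. \<Sum>j<3. \<Sum>k<3. levi_civita i j k * F j i k)
      = (\<Sum>j<3. \<Sum>i<3. \<Sum>k<3. - (levi_civita j i k * F j i k))"
    by (subst sum.swap) (intro sum.cong refl, subst levi_civita_swap, simp)
  then show ?thesis
    by (simp add: sum_negf right_diff_distrib sum_subtractf)
qed

lemma sum_id2: "finite S \<Longrightarrow> (\<Sum>j\<in>S. id2 i j * f j) = (if i \<in> S then f i else 0)"
  by (simp add: id2_def if_distrib[of "\<lambda>z. z * _"] sum.delta cong: if_cong)

lemma expval_id2: "expval ip psi id2 A = (\<Sum>b<2. ip (psi b) (A (psi b)))"
  by (simp add: expval_def sum_id2)

lemma expval_cong_matrix:
  assumes "\<And>b c. b < 2 \<Longrightarrow> c < 2 \<Longrightarrow> M b c = N b c"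
  shows "expval ip psi M A = expval ip psi N A"
  using assms by (simp add: expval_def)

lemma expval_add_matrix:
  "expval ip psi (\<lambda>b c. M b c + N b c) A = expval ip psi M A + expval ip psi N A"
  by (simp add: expval_def distrib_right sum.distrib)

lemma expval_scale_matrix:
  "expval ip psi (\<lambda>b c. z * M b c) A = z * expval ip psi M A"
  by (simp add: expval_def sum_distrib_left mult.assoc)

lemma expval_sum_matrix:
  "expval ip psi (\<lambda>b c. \<Sum>k\<in>K. M k b c) A = (\<Sum>k\<in>K. expval ip psi (M k) A)"
  unfolding expval_def
  by (simp add: sum_distrib_right sum.swap[of _ "{..<2}" K])

definition pauli_dot ::
  "(complex \<Rightarrow> 'f \<Rightarrow> 'f) \<Rightarrow> (nat \<Rightarrow> 'f \<Rightarrow> 'f) \<Rightarrow> (nat \<Rightarrow> 'f) \<Rightarrow> nat \<Rightarrow> 'f::ab_group_add" where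
  "pauli_dot scl Y psi a = (\<Sum>i<3. \<Sum>b<2. scl (pauli i a b) (Y i (psi b)))"

lemma expval_pauli_mult:
  assumes "i < 3" and "j < 3"
  shows "expval ip psi (\<lambda>b c. \<Sum>a<2. pauli i b a * pauli j a c) A
    = id2 i j * expval ip psi id2 A + \<i> * (\<Sum>k<3. levi_civita i j k * expval ip psi (pauli k) A)"
proof -
  have "expval ip psi (\<lambda>b c. \<Sum>a<2. pauli i b a * pauli j a c) A
      = expval ip psi (\<lambda>b c. id2 i j * id2 b c + \<i> * (\<Sum>k<3. levi_civita i j k * pauli k b c)) A"
    by (rule expval_cong_matrix) (simp add: pauli_mult assms)
  then show ?thesis
    by (simp add: expval_add_matrix expval_scale_matrix expval_sum_matrix)
qed

locale pre_hilbert =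
  fixes scl :: "complex \<Rightarrow> 'f::ab_group_add \<Rightarrow> 'f" and ip :: "'f \<Rightarrow> 'f \<Rightarrow> complex"
  assumes inner_product: "is_inner_product scl ip"
begin

sublocale vector_space scl
  using inner_product unfolding is_inner_product_def by blast

lemma ip_add_right: "ip u (v + w) = ip u v + ip u w"
  using inner_product unfolding is_inner_product_def by blast

lemma ip_scale_right: "ip u (scl c v) = c * ip u v"
  using inner_product unfolding is_inner_product_def by blast

lemma ip_conj_commute: "cnj (ip v u) = ip u v"
  using inner_product unfolding is_inner_product_def by (metis complex_cnj_cnj)

lemma ip_self_nonneg: "0 \<le> ip u u"
  using inner_product unfolding is_inner_product_def by blast

lemma additive_ip_right: "additive (ip u)"
  by unfold_locales (rule ip_add_right)

lemma ip_diff_right: "ip u (v - w) = ip u v - ip u w"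
  by (rule additive.diff[OF additive_ip_right])

lemma ip_sum_right: "ip u (\<Sum>x\<in>S. f x) = (\<Sum>x\<in>S. ip u (f x))"
  by (rule additive.sum[OF additive_ip_right])

lemma ip_scale_left: "ip (scl c u) w = cnj c * ip u w"
  by (subst ip_conj_commute[symmetric]) (simp add: ip_scale_right ip_conj_commute)

lemma ip_diff_left: "ip (u - v) w = ip u w - ip v w"
  by (subst ip_conj_commute[symmetric]) (simp add: ip_diff_right ip_conj_commute)

lemma ip_sum_left: "ip (\<Sum>x\<in>S. f x) w = (\<Sum>x\<in>S. ip (f x) w)"
  by (subst ip_conj_commute[symmetric]) (simp add: ip_sum_right ip_conj_commute)

lemma state_norm2_nonneg: "0 \<le> state_norm2 ip psi"
  unfolding state_norm2_def by (intro sum_nonneg ip_self_nonneg)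

lemma self_adjoint_op_ip:
  "self_adjoint_op scl ip A \<Longrightarrow> ip (A u) v = ip u (A v)"
  by (simp add: self_adjoint_op_def)

lemma self_adjoint_op_expval_real:
  assumes "self_adjoint_op scl ip A"
  shows "expval ip psi id2 A \<in> \<real>"
proof -
  have "cnj (expval ip psi id2 A) = expval ip psi id2 A"
    by (simp add: expval_id2 ip_conj_commute self_adjoint_op_ip[OF assms, symmetric])
  then show ?thesis
    by (simp add: Reals_cnj_iff)
qed

lemma self_adjoint_op_shift:
  assumes "self_adjoint_op scl ip A" and "c \<in> \<real>"
  shows "self_adjoint_op scl ip (\<lambda>v. A v - scl c v)"
proof -
  have "Vector_Spaces.linear scl scl (\<lambda>v. A v - scl c v)"
    using assms(1) unfolding self_adjoint_op_def Vector_Spaces.linear_iff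
    by (simp add: scale_right_distrib scale_right_diff_distrib mult.commute)
  moreover have "cnj c = c"
    using assms(2) by (simp add: Reals_cnj_iff)
  ultimately show ?thesis
    using self_adjoint_op_ip[OF assms(1)]
    by (simp add: self_adjoint_op_def ip_diff_left ip_diff_right ip_scale_left ip_scale_right)
qed

lemma commutator_shift:
  assumes "Vector_Spaces.linear scl scl A" and "Vector_Spaces.linear scl scl B"
  shows "(A (B v - scl b v) - scl a (B v - scl b v)) - (B (A v - scl a v) - scl b (A v - scl a v))
    = A (B v) - B (A v)"
proof -
  interpret A: module_hom scl scl A
    using assms(1) by (simp add: module_hom_iff_linear)
  interpret B: module_hom scl scl B
    using assms(2) by (simp add: module_hom_iff_linear)
  show ?thesis
    by (simp add: A.diff A.scale B.diff B.scale scale_right_diff_distrib mult.commute)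
qed

lemma expval_diff:
  "expval ip psi M (\<lambda>v. A v - B v) = expval ip psi M A - expval ip psi M B"
  by (simp add: expval_def ip_diff_right right_diff_distrib sum_subtractf)

lemma expval_scale:
  "expval ip psi M (\<lambda>v. scl z (A v)) = z * expval ip psi M A"
  by (simp add: expval_def ip_scale_right sum_distrib_left ac_simps)

lemma expval_sum:
  "expval ip psi M (\<lambda>v. \<Sum>i\<in>I. A i v) = (\<Sum>i\<in>I. expval ip psi M (A i))"
  by (simp add: expval_def ip_sum_right sum_distrib_left sum.swap[of _ "{..<2}" I])

lemma expval_ident: "expval ip psi id2 (\<lambda>v. v) = state_norm2 ip psi"
  by (simp add: expval_id2 state_norm2_def)

lemma expval_centered_square:
  assumes "self_adjoint_op scl ip A" and "state_norm2 ip psi = 1"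
  defines "x \<equiv> expval ip psi id2 A"
  shows "expval ip psi id2 (\<lambda>v. A (A v - scl x v) - scl x (A v - scl x v))
    = expval ip psi id2 (\<lambda>v. A (A v)) - x\<^sup>2"
proof -
  interpret A: module_hom scl scl A
    using assms(1) by (simp add: self_adjoint_op_def module_hom_iff_linear)
  have "(\<lambda>v. A (A v - scl x v) - scl x (A v - scl x v))
      = (\<lambda>v. (A (A v) - scl x (A v)) - (scl x (A v) - scl x (scl x v)))"
    by (simp add: A.diff A.scale scale_right_diff_distrib)
  then show ?thesis
    using assms(2) by (simp add: expval_diff expval_scale expval_ident x_def power2_eq_square)
qed

lemma state_norm2_pauli_dot_expand:
  assumes sa: "\<And>i. i < 3 \<Longrightarrow> self_adjoint_op scl ip (Y i)"
  shows "state_norm2 ip (pauli_dot scl Y psi)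
    = (\<Sum>i<3. \<Sum>j<3. expval ip psi (\<lambda>b c. \<Sum>a<2. pauli i b a * pauli j a c) (\<lambda>v. Y i (Y j v)))"
proof -
  have "ip (pauli_dot scl Y psi a) (pauli_dot scl Y psi a)
      = (\<Sum>i<3. \<Sum>b<2. \<Sum>j<3. \<Sum>c<2. pauli i b a * pauli j a c * ip (psi b) (Y i (Y j (psi c))))"
    for a
    unfolding pauli_dot_def ip_sum_left
    by (simp add: ip_sum_right ip_scale_left ip_scale_right pauli_hermitian
        self_adjoint_op_ip[OF sa] sum_distrib_left ac_simps)
  also have "\<dots> a = (\<Sum>i<3. \<Sum>j<3. expval ip psi (\<lambda>b c. pauli i b a * pauli j a c) (\<lambda>v. Y i (Y j v)))"
    for a
    unfolding expval_def by (rule sum.cong[OF refl]) (rule sum.swap)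
  finally show ?thesis
    unfolding state_norm2_def by (simp add: expval_sum_matrix sum.swap[of _ "{..<2}" "{..<3}"])
qed

lemma state_norm2_pauli_dot:
  assumes sa: "\<And>i. i < 3 \<Longrightarrow> self_adjoint_op scl ip (Y i)"
    and comm: "\<And>i j v. i < 3 \<Longrightarrow> j < 3 \<Longrightarrow> Y i (Y j v) - Y j (Y i v) = scl \<i> (T i j v)"
  shows "state_norm2 ip (pauli_dot scl Y psi)
    = expval ip psi id2 (\<lambda>v. \<Sum>i<3. Y i (Y i v))
      - 1/2 * (\<Sum>i<3. \<Sum>j<3. \<Sum>k<3. levi_civita i j k * expval ip psi (pauli k) (T i j))"
proof -
  let ?E = "\<lambda>M A. expval ip psi M A"
  have "state_norm2 ip (pauli_dot scl Y psi)
      = (\<Sum>i<3. \<Sum>j<3. id2 i j * ?E id2 (\<lambda>v. Y i (Y j v))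
          + \<i> * (\<Sum>k<3. levi_civita i j k * ?E (pauli k) (\<lambda>v. Y i (Y j v))))"
    by (simp add: state_norm2_pauli_dot_expand[OF sa] expval_pauli_mult)
  also have "\<dots> = ?E id2 (\<lambda>v. \<Sum>i<3. Y i (Y i v))
      + \<i> * (\<Sum>i<3. \<Sum>j<3. \<Sum>k<3. levi_civita i j k * ?E (pauli k) (\<lambda>v. Y i (Y j v)))"
    by (simp add: sum.distrib sum_id2 expval_sum sum_distrib_left)
  also have "(\<Sum>i<3. \<Sum>j<3. \<Sum>k<3. levi_civita i j k * ?E (pauli k) (\<lambda>v. Y i (Y j v)))
      = 1/2 * (\<Sum>i<3. \<Sum>j<3. \<Sum>k<3. levi_civita i j k * ?E (pauli k) (\<lambda>v. Y i (Y j v) - Y j (Y i v)))"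
    by (subst levi_civita_antisymmetrize) (simp add: expval_diff)
  also have "\<dots> = \<i>/2 * (\<Sum>i<3. \<Sum>j<3. \<Sum>k<3. levi_civita i j k * ?E (pauli k) (T i j))"
    by (simp add: comm expval_scale sum_distrib_left ac_simps)
  finally show ?thesis
    by simp
qed

lemma levi_civita_commutator_le_sum_squares:
  assumes "\<And>i. i < 3 \<Longrightarrow> self_adjoint_op scl ip (Y i)"
    and "\<And>i j v. i < 3 \<Longrightarrow> j < 3 \<Longrightarrow> Y i (Y j v) - Y j (Y i v) = scl \<i> (T i j v)"
  shows "1/2 * (\<Sum>i<3. \<Sum>j<3. \<Sum>k<3. levi_civita i j k * expval ip psi (pauli k) (T i j))
    \<le> expval ip psi id2 (\<lambda>v. \<Sum>i<3. Y i (Y i v))"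
  using state_norm2_nonneg[of "pauli_dot scl Y psi"] by (simp add: state_norm2_pauli_dot[OF assms])

end

theorem mainTheorem1:
  fixes scl :: "complex \<Rightarrow> 'f::ab_group_add \<Rightarrow> 'f"
    and ip :: "'f \<Rightarrow> 'f \<Rightarrow> complex"
    and X :: "nat \<Rightarrow> 'f \<Rightarrow> 'f"
    and Theta :: "nat \<Rightarrow> nat \<Rightarrow> 'f \<Rightarrow> 'f"
    and psi :: "nat \<Rightarrow> 'f"
  assumes ip: "is_inner_product scl ip"
    and sa: "\<And>i. i < 3 \<Longrightarrow> self_adjoint_op scl ip (X i)"
    and comm: "\<And>i j v. i < 3 \<Longrightarrow> j < 3 \<Longrightarrow> X i (X j v) - X j (X i v) = scl \<i> (Theta i j v)"
    and norm: "state_norm2 ip psi = 1"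
  shows "1/2 * (\<Sum>i<3. \<Sum>j<3. \<Sum>k<3. levi_civita i j k * expval ip psi (pauli k) (Theta i j))
         \<le> expval ip psi id2 (\<lambda>v. \<Sum>i<3. X i (X i v)) - (\<Sum>i<3. (expval ip psi id2 (X i))\<^sup>2)"
proof -
  interpret pre_hilbert scl ip
    by (rule pre_hilbert.intro) (rule ip)
  define x where "x i = expval ip psi id2 (X i)" for i
  define Y where "Y i v = X i v - scl (x i) v" for i v
  have sa_Y: "self_adjoint_op scl ip (Y i)" if "i < 3" for i
    using self_adjoint_op_shift[OF sa[OF that] self_adjoint_op_expval_real[OF sa[OF that]]]
    by (simp add: Y_def[abs_def] x_def)
  have comm_Y: "Y i (Y j v) - Y j (Y i v) = scl \<i> (Theta i j v)" if "i < 3" "j < 3" for i j v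
    using commutator_shift sa[OF that(1)] sa[OF that(2)] comm[OF that]
    by (simp add: Y_def self_adjoint_op_def)
  have "1/2 * (\<Sum>i<3. \<Sum>j<3. \<Sum>k<3. levi_civita i j k * expval ip psi (pauli k) (Theta i j))
      \<le> expval ip psi id2 (\<lambda>v. \<Sum>i<3. Y i (Y i v))"
    using sa_Y comm_Y by (rule levi_civita_commutator_le_sum_squares)
  also have "expval ip psi id2 (\<lambda>v. \<Sum>i<3. Y i (Y i v))
      = expval ip psi id2 (\<lambda>v. \<Sum>i<3. X i (X i v)) - (\<Sum>i<3. (expval ip psi id2 (X i))\<^sup>2)"
    unfolding expval_sum by (simp add: Y_def x_def expval_centered_square[OF sa norm] sum_subtractf)
  finally show ?thesis .
qed

end
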